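(* Let $F,K\ge1$ and $0\le Z< F$ be integers. If there exists an $S$-PDA$(F,K,Z)$ with $|S|=\dfrac{K(F-Z)}{Z+1}$, then $K=\ell\binom{F}{Z}$ for some integer $\ell\ge1$.
   Context: A placement delivery array $S$-PDA$(F,K,Z)$ is an $F\times K$ array $R=(r_{j,k})$, $1\le j\le F$, $1\le k\le K$, over a finite set $S$ such that: (1) each cell is either empty or contains an element of $S$; (2) each column contains exactly $Z$ empty cells; (3) each element of $S$ occurs at most once in each row and at most once in each column; (4) if two distinct nonempty cells satisfy $r_{j_1,k_1}=r_{j_2,k_2}=t\in S$, then the cells $r_{j_1,k_2}$ and $r_{j_2,k_1}$ are empty. *)

theory Defs
  imports Complex_Main
begin

text \<open>An F x K array over S: rows 1..F, columns 1..K; a cell is None (empty)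
or Some t with t in S. Values outside the index ranges are irrelevant.\<close>

definition is_PDA :: "'a set \<Rightarrow> nat \<Rightarrow> nat \<Rightarrow> nat \<Rightarrow> (nat \<Rightarrow> nat \<Rightarrow> 'a option) \<Rightarrow> bool" where
  "is_PDA S F K Z R \<longleftrightarrow>
     finite S \<and>
     (\<forall>j\<in>{1..F}. \<forall>k\<in>{1..K}. \<forall>t. R j k = Some t \<longrightarrow> t \<in> S) \<and>
     (\<forall>k\<in>{1..K}. card {j\<in>{1..F}. R j k = None} = Z) \<and>
     (\<forall>t. \<forall>j\<in>{1..F}. \<forall>k1\<in>{1..K}. \<forall>k2\<in>{1..K}.
        R j k1 = Some t \<and> R j k2 = Some t \<longrightarrow> k1 = k2) \<and>
     (\<forall>t. \<forall>k\<in>{1..K}. \<forall>j1\<in>{1..F}. \<forall>j2\<in>{1..F}.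
        R j1 k = Some t \<and> R j2 k = Some t \<longrightarrow> j1 = j2) \<and>
     (\<forall>t. \<forall>j1\<in>{1..F}. \<forall>j2\<in>{1..F}. \<forall>k1\<in>{1..K}. \<forall>k2\<in>{1..K}.
        (j1, k1) \<noteq> (j2, k2) \<and> R j1 k1 = Some t \<and> R j2 k2 = Some t \<longrightarrow>
        R j1 k2 = None \<and> R j2 k1 = None)"

end

theory Submission
  imports Defs
begin

text \<open>A symbol t occupies at most Z + 1 cells: its occurrences lie in distinct rows, and by
condition (4) all of them except one in column k lie in blank rows of column k. Counting the
K (F - Z) filled cells shows that the hypothesis on |S| forces exactly Z + 1 occurrences of every
symbol, so the blank rows of a column k carrying t in row j are precisely the other rows of t.
Consequently, for b outside a Z-set A, the columns with blank set A correspond bijectively (via the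
entry in row b) to the symbols occupying the rows A \<union> {b}. The number of columns with blank set A
is therefore unchanged when one element of A is exchanged for another, hence equal to one and the
same l for all Z-subsets of {1..F}, and K = l \<cdot> (F choose Z).\<close>

lemma eq_on_equal_card_subsets_if_exchange_invariant:
  assumes "finite X"
    and exchange: "\<And>A a b. A \<subseteq> X \<Longrightarrow> a \<in> A \<Longrightarrow> b \<in> X - A \<Longrightarrow> f (insert b A - {a}) = f A"
    and "A \<subseteq> X" "B \<subseteq> X" "card A = card B"
  shows "f A = f B"
  using assms(3-5)
proof (induction "card (A - B)" arbitrary: A rule: less_induct)
  case less
  have fin: "finite A" "finite B"
    using less.prems \<open>finite X\<close> finite_subset by blast+
  show ?case
  proof (cases "A \<subseteq> B")
    case True
    then show ?thesis
      using fin less.prems(3) card_subset_eq by metis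
  next
    case False
    then obtain a where a: "a \<in> A" "a \<notin> B" by blast
    have "card (B - A) = card (A - B)"
      using fin less.prems(3) by (simp add: card_Diff_subset_Int Int_commute)
    then have "B - A \<noteq> {}"
      using a fin by (metis Diff_iff card_0_eq empty_iff finite_Diff)
    then obtain b where b: "b \<in> B" "b \<notin> A" by blast
    let ?A' = "insert b A - {a}"
    have "?A' - B = (A - B) - {a}"
      using b by auto
    then have "card (?A' - B) < card (A - B)"
      using a fin by (metis DiffI card_Diff1_less finite_Diff)
    moreover have "card ?A' = card B"
      using a b fin less.prems(3) by (simp add: card_insert_if)
    moreover have "?A' \<subseteq> X"
      using less.prems(1,2) b by blast
    ultimately have "f ?A' = f B"
      using less.hyps less.prems(2) by blast
    then show ?thesis
      using exchange less.prems(1,2) a b by auto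
  qed
qed

locale PDA =
  fixes S :: "'a set" and F K Z :: nat and R :: "nat \<Rightarrow> nat \<Rightarrow> 'a option"
  assumes PDA: "is_PDA S F K Z R"
begin

definition blanks :: "nat \<Rightarrow> nat set" where
  "blanks k = {j \<in> {1..F}. R j k = None}"

definition occurrences :: "'a \<Rightarrow> (nat \<times> nat) set" where
  "occurrences t = {(k, j). k \<in> {1..K} \<and> j \<in> {1..F} \<and> R j k = Some t}"

definition occurrence_rows :: "'a \<Rightarrow> nat set" where
  "occurrence_rows t = snd ` occurrences t"

lemma finite_S: "finite S"
  using PDA unfolding is_PDA_def by blast

lemma entry_in_S: "j \<in> {1..F} \<Longrightarrow> k \<in> {1..K} \<Longrightarrow> R j k = Some t \<Longrightarrow> t \<in> S"
  using PDA unfolding is_PDA_def by blast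

lemma card_blanks: "k \<in> {1..K} \<Longrightarrow> card (blanks k) = Z"
  using PDA unfolding is_PDA_def blanks_def by blast

lemma blanks_subset: "blanks k \<subseteq> {1..F}"
  by (auto simp: blanks_def)

lemma finite_blanks: "finite (blanks k)"
  using blanks_subset finite_subset by blast

lemma entry_unique_in_row:
  "j \<in> {1..F} \<Longrightarrow> k1 \<in> {1..K} \<Longrightarrow> k2 \<in> {1..K} \<Longrightarrow> R j k1 = Some t \<Longrightarrow> R j k2 = Some t
    \<Longrightarrow> k1 = k2"
  using PDA unfolding is_PDA_def by blast

lemma cross_cell_blank:
  "j1 \<in> {1..F} \<Longrightarrow> j2 \<in> {1..F} \<Longrightarrow> k1 \<in> {1..K} \<Longrightarrow> k2 \<in> {1..K} \<Longrightarrow> (j1, k1) \<noteq> (j2, k2)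
    \<Longrightarrow> R j1 k1 = Some t \<Longrightarrow> R j2 k2 = Some t \<Longrightarrow> R j1 k2 = None"
  using PDA unfolding is_PDA_def by blast

lemma finite_occurrences: "finite (occurrences t)"
  by (rule finite_subset[of _ "{1..K} \<times> {1..F}"]) (auto simp: occurrences_def)

lemma finite_occurrence_rows: "finite (occurrence_rows t)"
  by (simp add: occurrence_rows_def finite_occurrences)

lemma inj_on_snd_occurrences: "inj_on snd (occurrences t)"
proof (rule inj_onI)
  fix x y
  assume "x \<in> occurrences t" "y \<in> occurrences t" "snd x = snd y"
  then show "x = y"
    using entry_unique_in_row[of "snd x" "fst x" "fst y" t] by (auto simp: occurrences_def)
qed

lemma card_occurrence_rows: "card (occurrence_rows t) = card (occurrences t)"
  unfolding occurrence_rows_def by (rule card_image[OF inj_on_snd_occurrences])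

lemma occurrence_rows_subset_blanks:
  assumes "(k, j) \<in> occurrences t"
  shows "occurrence_rows t - {j} \<subseteq> blanks k"
proof
  fix i
  assume "i \<in> occurrence_rows t - {j}"
  then obtain k' where "(k', i) \<in> occurrences t" "i \<noteq> j"
    by (auto simp: occurrence_rows_def)
  then show "i \<in> blanks k"
    using assms cross_cell_blank[of i j k' k t] by (auto simp: occurrences_def blanks_def)
qed

lemma card_occurrences_le: "card (occurrences t) \<le> Z + 1"
proof (cases "occurrences t = {}")
  case False
  then obtain k j where kj: "(k, j) \<in> occurrences t" by auto
  then have j: "j \<in> occurrence_rows t" and k: "k \<in> {1..K}"
    by (force simp: occurrence_rows_def occurrences_def)+
  have "card (occurrences t) = Suc (card (occurrence_rows t - {j}))"
    using card.remove[OF finite_occurrence_rows j]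
    by (simp add: card_occurrence_rows)
  also have "card (occurrence_rows t - {j}) \<le> card (blanks k)"
    by (rule card_mono[OF finite_blanks occurrence_rows_subset_blanks[OF kj]])
  finally show ?thesis
    using card_blanks[OF k] by simp
qed simp

lemma sum_card_occurrences: "(\<Sum>t\<in>S. card (occurrences t)) = K * (F - Z)"
proof -
  let ?filled = "SIGMA k:{1..K}. {1..F} - blanks k"
  have "?filled = (\<Union>t\<in>S. occurrences t)"
  proof (intro equalityI subsetI)
    fix c
    assume "c \<in> ?filled"
    then obtain k j where "c = (k, j)" "k \<in> {1..K}" "j \<in> {1..F}" "R j k \<noteq> None"
      unfolding blanks_def by blast
    moreover from this obtain t where "R j k = Some t" by blast
    ultimately show "c \<in> (\<Union>t\<in>S. occurrences t)"
      using entry_in_S by (auto simp: occurrences_def)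
  qed (auto simp: occurrences_def blanks_def)
  moreover have "card (\<Union>t\<in>S. occurrences t) = (\<Sum>t\<in>S. card (occurrences t))"
    using finite_S finite_occurrences by (intro card_UN_disjoint) (auto simp: occurrences_def)
  ultimately have "card ?filled = (\<Sum>t\<in>S. card (occurrences t))"
    by simp
  also have "card ?filled = (\<Sum>k\<in>{1..K}. card ({1..F} - blanks k))"
    by (rule card_SigmaI) auto
  also have "\<dots> = (\<Sum>k\<in>{1..K}. F - Z)"
  proof (rule sum.cong[OF refl])
    fix k
    assume "k \<in> {1..K}"
    then show "card ({1..F} - blanks k) = F - Z"
      using card_Diff_subset[OF finite_blanks blanks_subset, of k] card_blanks by simp
  qed
  finally show ?thesis by simp
qed

end

locale optimal_PDA = PDA +
  assumes card_S: "card S * (Z + 1) = K * (F - Z)"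
begin

definition columns_with_blanks :: "nat set \<Rightarrow> nat set" where
  "columns_with_blanks A = {k \<in> {1..K}. blanks k = A}"

lemma card_occurrences: "t \<in> S \<Longrightarrow> card (occurrences t) = Z + 1"
  using sum_mono_inv[of "\<lambda>t. card (occurrences t)" S "\<lambda>_. Z + 1"]
    sum_card_occurrences card_S card_occurrences_le finite_S by (simp add: mult.commute)

lemma blanks_eq_occurrence_rows:
  assumes "(k, j) \<in> occurrences t"
  shows "blanks k = occurrence_rows t - {j}"
proof -
  have "k \<in> {1..K}" "t \<in> S" "j \<in> occurrence_rows t"
    using assms by (force simp: occurrences_def occurrence_rows_def intro: entry_in_S)+
  then have "card (occurrence_rows t - {j}) = card (blanks k)"
    by (simp add: card_occurrence_rows card_occurrences card_blanks)
  then show ?thesis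
    using card_subset_eq[OF finite_blanks occurrence_rows_subset_blanks[OF assms]] by simp
qed

lemma card_columns_with_blanks:
  assumes b: "b \<in> {1..F}" "b \<notin> A"
  shows "card (columns_with_blanks A) = card {t \<in> S. occurrence_rows t = insert b A}"
proof -
  have occ: "(k, b) \<in> occurrences (the (R b k))" if "k \<in> columns_with_blanks A" for k
    using that b by (auto simp: columns_with_blanks_def blanks_def occurrences_def)
  have "bij_betw (\<lambda>k. the (R b k)) (columns_with_blanks A) {t \<in> S. occurrence_rows t = insert b A}"
  proof (rule bij_betw_imageI)
    show "inj_on (\<lambda>k. the (R b k)) (columns_with_blanks A)"
    proof (rule inj_onI)
      fix k1 k2
      assume k1: "k1 \<in> columns_with_blanks A" and k2: "k2 \<in> columns_with_blanks A"
        and eq: "the (R b k1) = the (R b k2)"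
      show "k1 = k2"
        using occ[OF k1] occ[OF k2] b(1) unfolding eq
        by (auto simp: occurrences_def intro: entry_unique_in_row)
    qed
    show "(\<lambda>k. the (R b k)) ` columns_with_blanks A = {t \<in> S. occurrence_rows t = insert b A}"
    proof (intro equalityI subsetI)
      fix t
      assume "t \<in> (\<lambda>k. the (R b k)) ` columns_with_blanks A"
      then obtain k where k: "k \<in> columns_with_blanks A" and t: "t = the (R b k)" by blast
      with occ have kb: "(k, b) \<in> occurrences t" by simp
      then have "t \<in> S"
        by (auto simp: occurrences_def intro: entry_in_S)
      have "b \<in> occurrence_rows t"
        using kb by (force simp: occurrence_rows_def)
      then have "occurrence_rows t = insert b (occurrence_rows t - {b})" by blast
      also have "occurrence_rows t - {b} = A"
        using blanks_eq_occurrence_rows[OF kb] k by (simp add: columns_with_blanks_def)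
      finally show "t \<in> {t \<in> S. occurrence_rows t = insert b A}"
        using \<open>t \<in> S\<close> by blast
    next
      fix t
      assume "t \<in> {t \<in> S. occurrence_rows t = insert b A}"
      then have rows_t: "occurrence_rows t = insert b A" by blast
      then have "b \<in> snd ` occurrences t"
        by (simp add: occurrence_rows_def)
      then obtain k where kb: "(k, b) \<in> occurrences t"
        by force
      have "blanks k = A"
        using blanks_eq_occurrence_rows[OF kb] rows_t b(2) by simp
      then have "k \<in> columns_with_blanks A"
        using kb by (simp add: columns_with_blanks_def occurrences_def)
      moreover have "the (R b k) = t"
        using kb by (simp add: occurrences_def)
      ultimately show "t \<in> (\<lambda>k. the (R b k)) ` columns_with_blanks A" by force
    qed
  qed
  then show ?thesis
    by (rule bij_betw_same_card)
qed

lemma card_columns_with_blanks_exchange: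
  assumes "A \<subseteq> {1..F}" "a \<in> A" "b \<in> {1..F} - A"
  shows "card (columns_with_blanks (insert b A - {a})) = card (columns_with_blanks A)"
proof -
  have "a \<in> {1..F}" "a \<notin> insert b A - {a}" "insert a (insert b A - {a}) = insert b A"
    using assms by auto
  then show ?thesis
    using card_columns_with_blanks[of a "insert b A - {a}"] card_columns_with_blanks[of b A] assms(3)
    by simp
qed

lemma K_eq_card_columns_with_blanks_mult_choose:
  assumes "k \<in> {1..K}"
  shows "K = card (columns_with_blanks (blanks k)) * (F choose Z)"
proof -
  let ?Zs = "{B. B \<subseteq> {1..F} \<and> card B = Z}"
  let ?l = "card (columns_with_blanks (blanks k))"
  have blanks_in_Zs: "blanks k' \<in> ?Zs" if "k' \<in> {1..K}" for k'
    using blanks_subset card_blanks[OF that] by blast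
  have const: "card (columns_with_blanks B) = ?l" if "B \<in> ?Zs" for B
  proof (rule eq_on_equal_card_subsets_if_exchange_invariant
      [where f = "\<lambda>A. card (columns_with_blanks A)", OF finite_atLeastAtMost])
    show "B \<subseteq> {1..F}" "card B = card (blanks k)"
      using that card_blanks[OF assms] by auto
    show "blanks k \<subseteq> {1..F}"
      by (rule blanks_subset)
  qed (rule card_columns_with_blanks_exchange)
  have "{1..K} = (\<Union>B\<in>?Zs. columns_with_blanks B)"
    using blanks_in_Zs unfolding columns_with_blanks_def by blast
  then have "K = card (\<Union>B\<in>?Zs. columns_with_blanks B)"
    by (metis card_atLeastAtMost diff_Suc_1)
  also have "\<dots> = (\<Sum>B\<in>?Zs. card (columns_with_blanks B))"
  proof (rule card_UN_disjoint)
    show "finite ?Zs"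
      by (rule finite_subset[of _ "Pow {1..F}"]) auto
    show "\<forall>B\<in>?Zs. finite (columns_with_blanks B)"
      by (simp add: columns_with_blanks_def)
    show "\<forall>B\<in>?Zs. \<forall>B'\<in>?Zs. B \<noteq> B' \<longrightarrow> columns_with_blanks B \<inter> columns_with_blanks B' = {}"
      unfolding columns_with_blanks_def by blast
  qed
  also have "\<dots> = ?l * (F choose Z)"
    using const by (simp add: n_subsets)
  finally show ?thesis .
qed

end

theorem mainTheorem6:
  fixes S :: "'a set" and F K Z :: nat and R :: "nat \<Rightarrow> nat \<Rightarrow> 'a option"
  assumes "F \<ge> 1" and "K \<ge> 1" and "Z < F"
    and "is_PDA S F K Z R"
    and "real (card S) = real K * (real F - real Z) / (real Z + 1)"
  shows "\<exists>l::nat. l \<ge> 1 \<and> K = l * (F choose Z)"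
proof -
  have "real (card S * (Z + 1)) = real (K * (F - Z))"
    using assms(3,5) by (simp add: field_simps of_nat_diff)
  then interpret optimal_PDA S F K Z R
    using assms(4) by unfold_locales (simp_all only: of_nat_eq_iff)
  define l where "l = card (columns_with_blanks (blanks 1))"
  have "K = l * (F choose Z)"
    unfolding l_def using K_eq_card_columns_with_blanks_mult_choose assms(2) by simp
  moreover have "l \<ge> 1"
    using \<open>K = l * (F choose Z)\<close> assms(2) by (cases l) auto
  ultimately show ?thesis by blast
qed

end
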